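(* Let $\delta_1,\delta_2,\delta_3>0$ with $\delta_3>2\delta_2$. There is a constant $C$ such that for all $n\ge1$, on the event $A_n$, $$|I_n^0|\le C\,n^{-\frac34+\frac{\delta_1}{2}}.$$
   Context: $Y$ is a simple symmetric random walk on $\mathbb Z$ with $Y_0=0$, with local time $\eta_n(y)=\sum_{k=0}^n\mathbf 1_{\{Y_k=y\}}$. $A_n=\{\max_{0\le k\le2n}|Y_k|<n^{1/2+\delta_1}\}\cap\{\max_{y\in\mathbb Z}\eta_{2n-1}(y)<n^{1/2+\delta_2}\}$. Set $d_{n,3}=n^{1/2+\delta_3}$, $b_n=n^{\delta_2}/d_{n,3}$, and $$I_n^0=\int_{|t|\le b_n}\prod_{y\in\mathbb Z}\cos\big(\eta_{2n-1}(y)\,t\big)\,e^{-t^2d_{n,3}^2/2}\,dt$$ (only finitely many factors differ from $1$). *)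

theory Defs
  imports "HOL-Analysis.Analysis"
begin

text \<open>Paths of a simple symmetric random walk on the integers started at 0.
  The statement holds pathwise on the event A_n, so we quantify over all such paths.\<close>
definition srw_path :: "(nat \<Rightarrow> int) \<Rightarrow> bool" where
  "srw_path Y \<longleftrightarrow> Y 0 = 0 \<and> (\<forall>k. \<bar>Y (Suc k) - Y k\<bar> = 1)"

definition local_time :: "(nat \<Rightarrow> int) \<Rightarrow> nat \<Rightarrow> int \<Rightarrow> nat" where
  "local_time Y n y = card {k \<in> {0..n}. Y k = y}"

definition event_A :: "real \<Rightarrow> real \<Rightarrow> (nat \<Rightarrow> int) \<Rightarrow> nat \<Rightarrow> bool" where
  "event_A \<delta>1 \<delta>2 Y n \<longleftrightarrow>
     (\<forall>k\<le>2*n. real_of_int \<bar>Y k\<bar> < real n powr (1/2 + \<delta>1)) \<and>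
     (\<forall>y. real (local_time Y (2*n - 1) y) < real n powr (1/2 + \<delta>2))"

definition d3 :: "real \<Rightarrow> nat \<Rightarrow> real" where
  "d3 \<delta>3 n = real n powr (1/2 + \<delta>3)"

definition bn :: "real \<Rightarrow> real \<Rightarrow> nat \<Rightarrow> real" where
  "bn \<delta>2 \<delta>3 n = real n powr \<delta>2 / d3 \<delta>3 n"

text \<open>I_n^0; the product over Z is taken over the finitely many sites with nonzero local time
  (all other factors equal cos 0 = 1).\<close>
definition I0 :: "real \<Rightarrow> real \<Rightarrow> (nat \<Rightarrow> int) \<Rightarrow> nat \<Rightarrow> real" where
  "I0 \<delta>2 \<delta>3 Y n = integral {- bn \<delta>2 \<delta>3 n .. bn \<delta>2 \<delta>3 n}
     (\<lambda>t. (\<Prod>y\<in>{y. local_time Y (2*n - 1) y \<noteq> 0}. cos (real (local_time Y (2*n - 1) y) * t))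
          * exp (- (t^2 * (d3 \<delta>3 n)^2) / 2))"

end

theory Submission
  imports Defs
begin

text \<open>On A_n every local time L(y) is below n^(1/2+delta2), so on the integration range
  |t| <= b_n one has |L(y) t| <= n^(2 delta2 - delta3) <= 1, where |cos u| <= exp(-u^2/4).
  Hence the integrand is dominated by exp(-S t^2/4) <= 1/(1 + S t^2/4) with S = sum_y L(y)^2,
  whose integral is at most 2 pi / sqrt S. The path visits at most 3 n^(1/2+delta1) sites and
  its local times add up to 2n, so by Cauchy-Schwarz S >= 4 n^2 / (3 n^(1/2+delta1)), which
  gives 2 pi / sqrt S <= pi sqrt 3 n^(-3/4+delta1/2).\<close>

lemma cos_le_taylor_quartic: "cos (x::real) \<le> 1 - x\<^sup>2 / 2 + x ^ 4 / 24"
proof -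
  obtain t where t: "cos x = (\<Sum>m<4. cos_coeff m * x ^ m) + cos (t + 1/2 * real 4 * pi) / fact 4 * x ^ 4"
    using Maclaurin_cos_expansion[of x 4] by blast
  have "cos_coeff 0 = 1" "cos_coeff 1 = 0" "cos_coeff 2 = -1/2" "cos_coeff 3 = 0"
    by (simp_all add: cos_coeff_def)
  then have "(\<Sum>m<4. cos_coeff m * x ^ m) = 1 - x\<^sup>2 / 2"
    by (simp add: eval_nat_numeral)
  moreover have "cos (t + 1/2 * real 4 * pi) / fact 4 * x ^ 4 \<le> x ^ 4 / 24"
    using mult_right_mono[OF cos_le_one[of "t + 1/2 * real 4 * pi"] zero_le_even_power[of 4 x]]
    by (simp add: fact_numeral)
  ultimately show ?thesis
    using t by linarith
qed

lemma abs_cos_le_exp: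
  assumes "\<bar>x::real\<bar> \<le> 1"
  shows "\<bar>cos x\<bar> \<le> exp (- (x\<^sup>2 / 4))"
proof -
  have "0 \<le> cos x"
    using assms pi_gt3 by (intro cos_ge_zero) auto
  have "x ^ 4 \<le> x\<^sup>2"
    using assms power_le_one[of "\<bar>x\<bar>" 2] mult_left_mono[of "x\<^sup>2" 1 "x\<^sup>2"]
    by (simp add: power4_eq_xxxx power2_eq_square)
  then have "cos x \<le> 1 + (- (x\<^sup>2 / 4))"
    using cos_le_taylor_quartic[of x] zero_le_power2[of x] by linarith
  also have "\<dots> \<le> exp (- (x\<^sup>2 / 4))"
    by (rule exp_ge_add_one_self)
  finally show ?thesis
    using \<open>0 \<le> cos x\<close> by simp
qed

lemma abs_prod_cos_le_exp:
  fixes a :: "'a \<Rightarrow> real"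
  assumes "finite V" and "\<And>y. y \<in> V \<Longrightarrow> \<bar>a y * t\<bar> \<le> 1"
  shows "\<bar>\<Prod>y\<in>V. cos (a y * t)\<bar> \<le> exp (- ((\<Sum>y\<in>V. (a y)\<^sup>2) / 4 * t\<^sup>2))"
proof -
  have "\<bar>\<Prod>y\<in>V. cos (a y * t)\<bar> = (\<Prod>y\<in>V. \<bar>cos (a y * t)\<bar>)"
    by (simp add: abs_prod)
  also have "\<dots> \<le> (\<Prod>y\<in>V. exp (- ((a y * t)\<^sup>2 / 4)))"
    using assms(2) by (intro prod_mono) (auto intro: abs_cos_le_exp)
  also have "\<dots> = exp (- ((\<Sum>y\<in>V. (a y)\<^sup>2) / 4 * t\<^sup>2))"
    using assms(1)
    by (simp add: exp_sum [symmetric] power_mult_distrib sum_distrib_right sum_divide_distrib sum_negf)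
  finally show ?thesis .
qed

lemma has_integral_inverse_one_plus_square:
  fixes a b :: real
  assumes "0 < a" and "0 \<le> b"
  shows "((\<lambda>t. 1 / (1 + a * t\<^sup>2)) has_integral
           (arctan (sqrt a * b) - arctan (sqrt a * (- b))) / sqrt a) {-b..b}"
proof -
  have "((\<lambda>t. arctan (sqrt a * t) / sqrt a) has_real_derivative 1 / (1 + a * x\<^sup>2)) (at x within {-b..b})"
    for x
  proof -
    have "0 < 1 + a * x\<^sup>2"
      using assms(1) by (simp add: add_pos_nonneg)
    then show ?thesis
      using assms(1)
      by (auto intro!: derivative_eq_intros simp: power_mult_distrib divide_simps)
  qed
  then show ?thesis
    using assms(2) fundamental_theorem_of_calculus[of "-b" b "\<lambda>t. arctan (sqrt a * t) / sqrt a"]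
    by (simp add: has_real_derivative_iff_has_vector_derivative diff_divide_distrib)
qed

lemma integral_inverse_one_plus_square_le:
  fixes a b :: real
  assumes "0 < a" and "0 \<le> b"
  shows "(\<lambda>t. 1 / (1 + a * t\<^sup>2)) integrable_on {-b..b}"
    and "integral {-b..b} (\<lambda>t. 1 / (1 + a * t\<^sup>2)) \<le> pi / sqrt a"
proof -
  note has_integral = has_integral_inverse_one_plus_square[OF assms]
  then show "(\<lambda>t. 1 / (1 + a * t\<^sup>2)) integrable_on {-b..b}"
    by blast
  have "integral {-b..b} (\<lambda>t. 1 / (1 + a * t\<^sup>2)) = (arctan (sqrt a * b) - arctan (sqrt a * (- b))) / sqrt a"
    using has_integral by (rule integral_unique)
  also have "\<dots> \<le> pi / sqrt a"
    using arctan_bounded[of "sqrt a * b"] arctan_bounded[of "sqrt a * (- b)"] assms(1)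
    by (intro divide_right_mono) auto
  finally show "integral {-b..b} (\<lambda>t. 1 / (1 + a * t\<^sup>2)) \<le> pi / sqrt a" .
qed

lemma abs_integral_cos_product_gaussian_le:
  fixes a :: "'a \<Rightarrow> real"
  assumes "finite V" and "0 \<le> b" and "\<And>y. y \<in> V \<Longrightarrow> \<bar>a y\<bar> * b \<le> 1"
    and "0 < (\<Sum>y\<in>V. (a y)\<^sup>2)"
  shows "\<bar>integral {-b..b} (\<lambda>t. (\<Prod>y\<in>V. cos (a y * t)) * exp (- (t\<^sup>2 * c\<^sup>2) / 2))\<bar>
           \<le> 2 * pi / sqrt (\<Sum>y\<in>V. (a y)\<^sup>2)"
proof -
  define S where "S = (\<Sum>y\<in>V. (a y)\<^sup>2)"
  define f where "f = (\<lambda>t. (\<Prod>y\<in>V. cos (a y * t)) * exp (- (t\<^sup>2 * c\<^sup>2) / 2))"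
  define g where "g = (\<lambda>t. 1 / (1 + S / 4 * t\<^sup>2))"
  have "0 < S / 4"
    using assms(4) by (simp add: S_def)
  have "norm (f t) \<le> g t" if "t \<in> {-b..b}" for t
  proof -
    have "\<bar>a y * t\<bar> \<le> 1" if "y \<in> V" for y
      using \<open>t \<in> {-b..b}\<close> assms(3)[OF that] mult_left_mono[of "\<bar>t\<bar>" b "\<bar>a y\<bar>"]
      by (simp add: abs_mult abs_le_iff)
    then have "\<bar>\<Prod>y\<in>V. cos (a y * t)\<bar> \<le> exp (- (S / 4 * t\<^sup>2))"
      unfolding S_def by (intro abs_prod_cos_le_exp assms(1))
    then have "norm (f t) \<le> exp (- (S / 4 * t\<^sup>2)) * 1"
      unfolding f_def real_norm_def abs_mult by (intro mult_mono) auto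
    also have "\<dots> \<le> g t"
      using exp_ge_add_one_self[of "S / 4 * t\<^sup>2"] \<open>0 < S / 4\<close>
      by (simp add: g_def exp_minus inverse_eq_divide frac_le add_pos_nonneg)
    finally show ?thesis .
  qed
  moreover have "f integrable_on {-b..b}"
    unfolding f_def by (intro integrable_continuous_interval continuous_intros) auto
  moreover have "g integrable_on {-b..b}"
    unfolding g_def by (rule integral_inverse_one_plus_square_le(1)[OF \<open>0 < S / 4\<close> assms(2)])
  ultimately have "\<bar>integral {-b..b} f\<bar> \<le> integral {-b..b} g"
    using integral_norm_bound_integral[of f "{-b..b}" g] by simp
  also have "\<dots> \<le> pi / sqrt (S / 4)"
    unfolding g_def by (rule integral_inverse_one_plus_square_le(2)[OF \<open>0 < S / 4\<close> assms(2)])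
  also have "\<dots> = 2 * pi / sqrt S"
    by (simp add: real_sqrt_divide)
  finally show ?thesis
    unfolding f_def S_def .
qed

lemma local_time_support: "{y. local_time Y N y \<noteq> 0} = Y ` {0..N}"
  by (auto simp: local_time_def)

lemma sum_local_time: "(\<Sum>y\<in>Y ` {0..N}. local_time Y N y) = Suc N"
proof -
  have "Suc N = (\<Sum>k\<in>{0..N}. 1::nat)"
    by simp
  also have "\<dots> = (\<Sum>y\<in>Y ` {0..N}. \<Sum>k\<in>{k \<in> {0..N}. Y k = y}. 1::nat)"
    by (rule sum.image_gen) simp
  finally show ?thesis
    by (simp add: local_time_def)
qed

lemma card_image_le_of_abs_bound:
  fixes Y :: "nat \<Rightarrow> int"
  assumes "\<And>k. k \<le> N \<Longrightarrow> real_of_int \<bar>Y k\<bar> < R"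
  shows "real (card (Y ` {0..N})) \<le> 2 * R + 1"
proof -
  define m where "m = \<lfloor>R\<rfloor>"
  have "0 \<le> m"
    using assms[of 0] by (simp add: m_def)
  have "Y k \<in> {-m..m}" if "k \<le> N" for k
    using assms[OF that] le_floor_iff[of "\<bar>Y k\<bar>" R] by (auto simp: m_def abs_le_iff)
  then have "Y ` {0..N} \<subseteq> {-m..m}"
    by auto
  then have "real (card (Y ` {0..N})) \<le> real (card {-m..m})"
    by (intro of_nat_mono card_mono) auto
  also have "\<dots> = 2 * real_of_int m + 1"
    using \<open>0 \<le> m\<close> by simp
  also have "\<dots> \<le> 2 * R + 1"
    unfolding m_def by linarith
  finally show ?thesis .
qed

lemma sum_squares_local_time_ge:
  fixes Y :: "nat \<Rightarrow> int"
  assumes "\<And>k. k \<le> N \<Longrightarrow> real_of_int \<bar>Y k\<bar> < R"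
  shows "(real (Suc N))\<^sup>2 \<le> (2 * R + 1) * (\<Sum>y\<in>{y. local_time Y N y \<noteq> 0}. (real (local_time Y N y))\<^sup>2)"
proof -
  let ?V = "Y ` {0..N}"
  have "(real (Suc N))\<^sup>2 = (\<Sum>y\<in>?V. real (local_time Y N y))\<^sup>2"
    by (metis sum_local_time of_nat_sum)
  also have "\<dots> \<le> (\<Sum>y\<in>?V. (real (local_time Y N y))\<^sup>2) * real (card ?V)"
    by (rule sum_squared_le_sum_of_squares)
  also have "\<dots> \<le> (\<Sum>y\<in>?V. (real (local_time Y N y))\<^sup>2) * (2 * R + 1)"
    using card_image_le_of_abs_bound[OF assms] by (intro mult_left_mono sum_nonneg) auto
  finally show ?thesis
    unfolding local_time_support by (simp only: mult.commute)
qed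

lemma local_time_mult_bn_le_one:
  assumes "1 \<le> n" and "2 * \<delta>2 < \<delta>3" and "event_A \<delta>1 \<delta>2 Y n"
  shows "real (local_time Y (2 * n - 1) y) * bn \<delta>2 \<delta>3 n \<le> 1"
proof -
  have "real (local_time Y (2 * n - 1) y) \<le> real n powr (1/2 + \<delta>2)"
    using assms(3) by (simp add: event_A_def less_imp_le)
  then have "real (local_time Y (2 * n - 1) y) * bn \<delta>2 \<delta>3 n
      \<le> real n powr (1/2 + \<delta>2) * (real n powr \<delta>2 / real n powr (1/2 + \<delta>3))"
    unfolding bn_def d3_def by (rule mult_right_mono) simp
  also have "\<dots> = real n powr (2 * \<delta>2 - \<delta>3)"
    using assms(1) by (simp add: powr_add [symmetric] powr_diff [symmetric] algebra_simps)
  also have "\<dots> \<le> real n powr 0"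
    using assms(1,2) by (intro powr_mono) auto
  finally show ?thesis
    using assms(1) by simp
qed

lemma sum_squares_local_time_ge_event_A:
  assumes "1 \<le> n" and "0 \<le> \<delta>1" and "event_A \<delta>1 \<delta>2 Y n"
  shows "4 * (real n)\<^sup>2
           \<le> 3 * real n powr (1/2 + \<delta>1) * (\<Sum>y\<in>{y. local_time Y (2 * n - 1) y \<noteq> 0}. (real (local_time Y (2 * n - 1) y))\<^sup>2)"
proof -
  define R where "R = real n powr (1/2 + \<delta>1)"
  define S where "S = (\<Sum>y\<in>{y. local_time Y (2 * n - 1) y \<noteq> 0}. (real (local_time Y (2 * n - 1) y))\<^sup>2)"
  have "1 \<le> R"
    unfolding R_def using assms(1,2) by (intro ge_one_powr_ge_zero) auto
  have "(real (Suc (2 * n - 1)))\<^sup>2 \<le> (2 * R + 1) * S"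
    unfolding S_def using assms(3) by (intro sum_squares_local_time_ge) (auto simp: event_A_def R_def)
  also have "\<dots> \<le> 3 * R * S"
    using \<open>1 \<le> R\<close> by (intro mult_right_mono) (auto simp: S_def intro: sum_nonneg)
  finally show ?thesis
    using assms(1) by (simp add: R_def S_def of_nat_diff power_mult_distrib)
qed

lemma divide_sqrt_le_of_square_le:
  fixes x y s c :: real
  assumes "0 < x" and "0 \<le> y" and "0 \<le> c" and "x\<^sup>2 \<le> y * s"
  shows "c / sqrt s \<le> c * sqrt y / x"
proof -
  have "0 < y * s"
    using assms(1,4) zero_less_power[of x 2] by linarith
  then have "0 < s"
    using assms(2) by (simp add: zero_less_mult_iff)
  have "x \<le> sqrt y * sqrt s"
    using assms(4) by (simp add: real_le_rsqrt real_sqrt_mult [symmetric])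
  then show ?thesis
    using assms(1,3) \<open>0 < s\<close> by (simp add: divide_simps mult_left_mono mult.assoc)
qed

lemma sqrt_powr_divide_self: "0 < x \<Longrightarrow> sqrt (x powr p) / x = x powr (p / 2 - 1)"
  by (simp add: powr_half_sqrt_powr powr_diff)

theorem lemma6:
  fixes \<delta>1 \<delta>2 \<delta>3 :: real
  assumes "\<delta>1 > 0" "\<delta>2 > 0" "\<delta>3 > 0" "\<delta>3 > 2 * \<delta>2"
  shows "\<exists>C::real. \<forall>n::nat. \<forall>Y. n \<ge> 1 \<longrightarrow> srw_path Y \<longrightarrow> event_A \<delta>1 \<delta>2 Y n \<longrightarrow>
           \<bar>I0 \<delta>2 \<delta>3 Y n\<bar> \<le> C * real n powr (- 3/4 + \<delta>1 / 2)"
proof (intro exI[of _ "pi * sqrt 3"] allI impI)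
  fix n :: nat and Y :: "nat \<Rightarrow> int"
  assume "1 \<le> n" and "srw_path Y" and A: "event_A \<delta>1 \<delta>2 Y n"
  define S where "S = (\<Sum>y\<in>{y. local_time Y (2 * n - 1) y \<noteq> 0}. (real (local_time Y (2 * n - 1) y))\<^sup>2)"
  have S_ge: "(2 * real n)\<^sup>2 \<le> (3 * real n powr (1/2 + \<delta>1)) * S"
    using sum_squares_local_time_ge_event_A[OF \<open>1 \<le> n\<close> _ A] assms(1) by (simp add: S_def power_mult_distrib)
  have "\<bar>I0 \<delta>2 \<delta>3 Y n\<bar> \<le> 2 * pi / sqrt S"
    unfolding I0_def S_def
  proof (rule abs_integral_cos_product_gaussian_le)
    show "finite {y. local_time Y (2 * n - 1) y \<noteq> 0}"
      by (simp only: local_time_support finite_imageI finite_atLeastAtMost)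
    show "0 \<le> bn \<delta>2 \<delta>3 n"
      by (simp add: bn_def d3_def)
    show "\<bar>real (local_time Y (2 * n - 1) y)\<bar> * bn \<delta>2 \<delta>3 n \<le> 1" for y
      using local_time_mult_bn_le_one[OF \<open>1 \<le> n\<close> assms(4) A] by simp
    have "0 < (2 * real n)\<^sup>2"
      using \<open>1 \<le> n\<close> by simp
    then have "0 < (3 * real n powr (1/2 + \<delta>1)) * S"
      using S_ge by linarith
    then show "0 < (\<Sum>y\<in>{y. local_time Y (2 * n - 1) y \<noteq> 0}. (real (local_time Y (2 * n - 1) y))\<^sup>2)"
      unfolding S_def [symmetric] using \<open>1 \<le> n\<close> by (simp add: zero_less_mult_iff)
  qed
  also have "\<dots> \<le> 2 * pi * sqrt (3 * real n powr (1/2 + \<delta>1)) / (2 * real n)"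
    using S_ge \<open>1 \<le> n\<close> by (intro divide_sqrt_le_of_square_le) auto
  also have "\<dots> = pi * sqrt 3 * (sqrt (real n powr (1/2 + \<delta>1)) / real n)"
    by (simp add: real_sqrt_mult)
  also have "\<dots> = pi * sqrt 3 * real n powr (- 3/4 + \<delta>1 / 2)"
    using \<open>1 \<le> n\<close> sqrt_powr_divide_self[of "real n" "1/2 + \<delta>1"] by (simp add: add_divide_distrib)
  finally show "\<bar>I0 \<delta>2 \<delta>3 Y n\<bar> \<le> pi * sqrt 3 * real n powr (- 3/4 + \<delta>1 / 2)" .
qed

end
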